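(* Let $G$ be a compact, totally disconnected group and $\alpha$ an automorphism of $G$ such that $(G,\alpha)$ is topologically transitive, and let $N\le G$ be a finite, normal, $\alpha$-stable subgroup. Then $N$ is contained in the centre of $G$.
   Context: $(G,\alpha)$ is topologically transitive if some orbit $\{\alpha^n(x):n\in\mathbb{Z}\}$ is dense in $G$. A subgroup $N$ is $\alpha$-stable if $\alpha(N)=N$. *)

theory Defs
  imports "HOL-Analysis.Analysis" "HOL-Algebra.Algebra"
begin

definition topological_group :: "('a, 'b) monoid_scheme \<Rightarrow> 'a topology \<Rightarrow> bool" where
  "topological_group G T \<longleftrightarrow> group G \<and> topspace T = carrier G \<and>
     continuous_map (prod_topology T T) T (\<lambda>(x, y). x \<otimes>\<^bsub>G\<^esub> y) \<and>
     continuous_map T T (\<lambda>x. inv\<^bsub>G\<^esub> x)"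

definition totally_disconnected_space :: "'a topology \<Rightarrow> bool" where
  "totally_disconnected_space T \<longleftrightarrow>
     (\<forall>S. S \<subseteq> topspace T \<and> connectedin T S \<longrightarrow> (\<exists>a. S \<subseteq> {a}))"

definition top_group_aut :: "('a, 'b) monoid_scheme \<Rightarrow> 'a topology \<Rightarrow> ('a \<Rightarrow> 'a) \<Rightarrow> bool" where
  "top_group_aut G T \<alpha> \<longleftrightarrow> \<alpha> \<in> iso G G \<and> homeomorphic_map T T \<alpha>"

definition aut_pow :: "('a, 'b) monoid_scheme \<Rightarrow> ('a \<Rightarrow> 'a) \<Rightarrow> int \<Rightarrow> 'a \<Rightarrow> 'a" where
  "aut_pow G \<alpha> n = (if 0 \<le> n then \<alpha> ^^ nat n else inv_into (carrier G) \<alpha> ^^ nat (- n))"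

definition topologically_transitive ::
    "('a, 'b) monoid_scheme \<Rightarrow> 'a topology \<Rightarrow> ('a \<Rightarrow> 'a) \<Rightarrow> bool" where
  "topologically_transitive G T \<alpha> \<longleftrightarrow>
     (\<exists>x\<in>carrier G. T closure_of {aut_pow G \<alpha> n x | n. True} = topspace T)"

definition group_center :: "('a, 'b) monoid_scheme \<Rightarrow> 'a set" where
  "group_center G = {z \<in> carrier G. \<forall>g\<in>carrier G. z \<otimes>\<^bsub>G\<^esub> g = g \<otimes>\<^bsub>G\<^esub> z}"

end

theory Submission
  imports Defs
begin

text \<open>The centraliser \<open>C\<close> of \<open>N\<close> is closed because points are closed, and it is open because
  each conjugation map \<open>g \<mapsto> g m g\<inverse>\<close> (\<open>m \<in> N\<close>) takes values in the finite set \<open>N\<close>, so its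
  fibres are clopen. Since \<open>\<alpha>\<close> permutes \<open>N\<close>, \<open>C\<close> is \<open>\<alpha>\<close>-invariant, so a dense orbit lies either
  in \<open>C\<close> or in its complement. Both are closed and \<open>1 \<in> C\<close>, hence \<open>C = G\<close>.
  Total disconnectedness is used only to make points closed.\<close>

definition centralizer :: "('a, 'b) monoid_scheme \<Rightarrow> 'a set \<Rightarrow> 'a set" where
  "centralizer G N = {g \<in> carrier G. \<forall>m\<in>N. g \<otimes>\<^bsub>G\<^esub> m = m \<otimes>\<^bsub>G\<^esub> g}"

lemma totally_disconnected_imp_t1_space:
  assumes "totally_disconnected_space T"
  shows "t1_space T"
  unfolding t1_space_closedin_singleton
proof
  fix x assume x: "x \<in> topspace T"
  have "connectedin T (T closure_of {x})"
    using x by (intro connectedin_closure_of) simp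
  then obtain a where "T closure_of {x} \<subseteq> {a}"
    using assms closure_of_subset_topspace[of T "{x}"]
    unfolding totally_disconnected_space_def by blast
  moreover have "x \<in> T closure_of {x}"
    using x closure_of_subset[of "{x}" T] by simp
  ultimately have "T closure_of {x} = {x}"
    by blast
  then show "closedin T {x}"
    by (simp only: closure_of_eq)
qed

lemma openin_fibre_of_finite_image:
  assumes f: "continuous_map S U f" and "t1_space U" and "finite (f ` topspace S)"
  shows "openin S {x \<in> topspace S. f x = y}"
proof -
  have "closedin U (f ` topspace S - {y})"
    using assms continuous_map_image_subset_topspace[OF f]
    by (meson Diff_subset finite_Diff subset_trans t1_space_closedin_finite)
  then have "closedin S {x \<in> topspace S. f x \<in> f ` topspace S - {y}}"
    using closedin_continuous_map_preimage[OF f] by blast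
  moreover have "{x \<in> topspace S. f x \<in> f ` topspace S - {y}}
      = topspace S - {x \<in> topspace S. f x = y}"
    by auto
  ultimately show ?thesis
    by (auto simp: openin_closedin_eq)
qed

lemma topological_group_continuous_conjugation:
  assumes G: "topological_group G T" and m: "m \<in> carrier G"
  shows "continuous_map T T (\<lambda>g. g \<otimes>\<^bsub>G\<^esub> m \<otimes>\<^bsub>G\<^esub> inv\<^bsub>G\<^esub> g)"
proof -
  have top: "topspace T = carrier G"
    and mult: "continuous_map (prod_topology T T) T (\<lambda>(x, y). x \<otimes>\<^bsub>G\<^esub> y)"
    and inv: "continuous_map T T (\<lambda>x. inv\<^bsub>G\<^esub> x)"
    using G unfolding topological_group_def by auto
  have "continuous_map T T (\<lambda>g. g \<otimes>\<^bsub>G\<^esub> m)"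
    using continuous_map_compose[OF _ mult, of T "\<lambda>g. (g, m)"] m top
    by (simp add: continuous_map_pairwise o_def)
  then show ?thesis
    using continuous_map_compose[OF _ mult, of T "\<lambda>g. (g \<otimes>\<^bsub>G\<^esub> m, inv\<^bsub>G\<^esub> g)"] inv
    by (simp add: continuous_map_pairwise o_def)
qed

lemma centralizer_eq_Inter_conjugation_fibres:
  assumes "group G" "topspace T = carrier G" "N \<subseteq> carrier G"
  shows "centralizer G N =
    topspace T \<inter> (\<Inter>m\<in>N. {g \<in> topspace T. g \<otimes>\<^bsub>G\<^esub> m \<otimes>\<^bsub>G\<^esub> inv\<^bsub>G\<^esub> g = m})"
proof -
  have commute_iff: "g \<otimes>\<^bsub>G\<^esub> m \<otimes>\<^bsub>G\<^esub> inv\<^bsub>G\<^esub> g = m \<longleftrightarrow> g \<otimes>\<^bsub>G\<^esub> m = m \<otimes>\<^bsub>G\<^esub> g"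
    if "g \<in> carrier G" "m \<in> N" for g m
    using that assms group.inv_solve_right'[OF assms(1)]
    by (simp add: subsetD group.is_monoid monoid.m_closed)
  show ?thesis
    unfolding set_eq_iff centralizer_def using assms(2)
    by (simp add: commute_iff cong: conj_cong)
qed

lemma closedin_centralizer:
  assumes G: "topological_group G T" and "t1_space T" and N: "N \<subseteq> carrier G"
  shows "closedin T (centralizer G N)"
proof -
  have grp: "group G" and top: "topspace T = carrier G"
    using G unfolding topological_group_def by auto
  let ?F = "\<lambda>m. {g \<in> topspace T. g \<otimes>\<^bsub>G\<^esub> m \<otimes>\<^bsub>G\<^esub> inv\<^bsub>G\<^esub> g = m}"
  have "closedin T (?F m)" if "m \<in> N" for m
    using that N top closedin_continuous_map_preimage
      [OF topological_group_continuous_conjugation[OF G] closedin_t1_singleton[OF \<open>t1_space T\<close>]]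
    by auto
  then have "closedin T (\<Inter> (insert (topspace T) (?F ` N)))"
    by (intro closedin_Inter) auto
  then show ?thesis
    by (simp add: centralizer_eq_Inter_conjugation_fibres[OF grp top N])
qed

lemma openin_centralizer_of_finite_normal:
  assumes G: "topological_group G T" and "t1_space T" and "finite N" and "N \<lhd> G"
  shows "openin T (centralizer G N)"
proof -
  have grp: "group G" and top: "topspace T = carrier G"
    using G unfolding topological_group_def by auto
  have N: "N \<subseteq> carrier G"
    using \<open>N \<lhd> G\<close> normal_imp_subgroup subgroup.subset by blast
  let ?F = "\<lambda>m. {g \<in> topspace T. g \<otimes>\<^bsub>G\<^esub> m \<otimes>\<^bsub>G\<^esub> inv\<^bsub>G\<^esub> g = m}"
  have "openin T (?F m)" if m: "m \<in> N" for m
  proof (rule openin_fibre_of_finite_image[OF _ \<open>t1_space T\<close>])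
    show "continuous_map T T (\<lambda>g. g \<otimes>\<^bsub>G\<^esub> m \<otimes>\<^bsub>G\<^esub> inv\<^bsub>G\<^esub> g)"
      using m N by (intro topological_group_continuous_conjugation[OF G]) auto
    have "(\<lambda>g. g \<otimes>\<^bsub>G\<^esub> m \<otimes>\<^bsub>G\<^esub> inv\<^bsub>G\<^esub> g) ` topspace T \<subseteq> N"
      using m top \<open>N \<lhd> G\<close> normal.inv_op_closed2 by fastforce
    then show "finite ((\<lambda>g. g \<otimes>\<^bsub>G\<^esub> m \<otimes>\<^bsub>G\<^esub> inv\<^bsub>G\<^esub> g) ` topspace T)"
      using \<open>finite N\<close> finite_subset by blast
  qed
  then have "openin T ((\<Inter>m\<in>N. ?F m) \<inter> topspace T)"
    using \<open>finite N\<close> by (intro openin_INT)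
  then show ?thesis
    by (simp add: centralizer_eq_Inter_conjugation_fibres[OF grp top N] Int_commute)
qed

lemma iso_mem_centralizer_iff:
  assumes "group G" and \<alpha>: "\<alpha> \<in> iso G G" and "\<alpha> ` N = N" and "N \<subseteq> carrier G"
    and y: "y \<in> carrier G"
  shows "\<alpha> y \<in> centralizer G N \<longleftrightarrow> y \<in> centralizer G N"
proof -
  have hom: "\<alpha> \<in> hom G G" and inj: "inj_on \<alpha> (carrier G)"
    using \<alpha> by (auto simp: iso_iff)
  have "\<alpha> y \<otimes>\<^bsub>G\<^esub> \<alpha> m = \<alpha> m \<otimes>\<^bsub>G\<^esub> \<alpha> y \<longleftrightarrow> y \<otimes>\<^bsub>G\<^esub> m = m \<otimes>\<^bsub>G\<^esub> y" if "m \<in> N" for m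
  proof -
    have m: "m \<in> carrier G" using that assms(4) by auto
    have "\<alpha> y \<otimes>\<^bsub>G\<^esub> \<alpha> m = \<alpha> (y \<otimes>\<^bsub>G\<^esub> m)" "\<alpha> m \<otimes>\<^bsub>G\<^esub> \<alpha> y = \<alpha> (m \<otimes>\<^bsub>G\<^esub> y)"
      using hom y m by (simp_all add: hom_mult)
    then show ?thesis
      using inj y m \<open>group G\<close> by (simp add: inj_on_eq_iff group.is_monoid monoid.m_closed)
  qed
  then have "(\<forall>m\<in>\<alpha> ` N. \<alpha> y \<otimes>\<^bsub>G\<^esub> m = m \<otimes>\<^bsub>G\<^esub> \<alpha> y) \<longleftrightarrow> (\<forall>m\<in>N. y \<otimes>\<^bsub>G\<^esub> m = m \<otimes>\<^bsub>G\<^esub> y)"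
    by simp
  then show ?thesis
    using \<open>\<alpha> ` N = N\<close> y hom_in_carrier[OF hom y] unfolding centralizer_def by auto
qed

lemma funpow_mem_invariant_iff:
  assumes "\<forall>y\<in>A. f y \<in> A \<and> (f y \<in> C \<longleftrightarrow> y \<in> C)" and "x \<in> A"
  shows "(f ^^ n) x \<in> A \<and> ((f ^^ n) x \<in> C \<longleftrightarrow> x \<in> C)"
  using assms by (induction n) auto

lemma aut_pow_mem_invariant_iff:
  assumes \<alpha>: "bij_betw \<alpha> (carrier G) (carrier G)"
    and inv: "\<forall>y\<in>carrier G. \<alpha> y \<in> C \<longleftrightarrow> y \<in> C" and x: "x \<in> carrier G"
  shows "aut_pow G \<alpha> k x \<in> carrier G \<and> (aut_pow G \<alpha> k x \<in> C \<longleftrightarrow> x \<in> C)"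
proof (cases "0 \<le> k")
  case True
  have "\<forall>y\<in>carrier G. \<alpha> y \<in> carrier G \<and> (\<alpha> y \<in> C \<longleftrightarrow> y \<in> C)"
    using \<alpha> inv bij_betwE by blast
  then show ?thesis
    using True funpow_mem_invariant_iff[OF _ x] x by (simp add: aut_pow_def)
next
  case False
  let ?\<beta> = "inv_into (carrier G) \<alpha>"
  have "\<forall>y\<in>carrier G. ?\<beta> y \<in> carrier G \<and> (?\<beta> y \<in> C \<longleftrightarrow> y \<in> C)"
  proof
    fix y assume y: "y \<in> carrier G"
    have "?\<beta> y \<in> carrier G"
      using bij_betw_inv_into[OF \<alpha>] y bij_betwE by blast
    moreover have "\<alpha> (?\<beta> y) = y"
      using y \<alpha> by (simp add: bij_betw_def f_inv_into_f)
    ultimately show "?\<beta> y \<in> carrier G \<and> (?\<beta> y \<in> C \<longleftrightarrow> y \<in> C)"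
      using inv by metis
  qed
  then show ?thesis
    using False funpow_mem_invariant_iff[OF _ x] x by (simp add: aut_pow_def)
qed

lemma topologically_transitive_clopen_invariant:
  assumes trans: "topologically_transitive G T \<alpha>"
    and \<alpha>: "bij_betw \<alpha> (carrier G) (carrier G)" and top: "topspace T = carrier G"
    and "openin T C" "closedin T C" "C \<noteq> {}"
    and inv: "\<forall>y\<in>carrier G. \<alpha> y \<in> C \<longleftrightarrow> y \<in> C"
  shows "C = carrier G"
proof -
  obtain x where x: "x \<in> carrier G"
    and dense: "T closure_of {aut_pow G \<alpha> n x | n. True} = topspace T"
    using trans unfolding topologically_transitive_def by blast
  let ?O = "{aut_pow G \<alpha> n x | n. True}"
  have orbit: "?O \<subseteq> carrier G" "\<forall>z\<in>?O. z \<in> C \<longleftrightarrow> x \<in> C"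
    using aut_pow_mem_invariant_iff[OF \<alpha> inv x] by auto
  have C: "C \<subseteq> carrier G"
    using \<open>closedin T C\<close> closedin_subset top by blast
  show ?thesis
  proof (cases "x \<in> C")
    case True
    then have "T closure_of ?O \<subseteq> C"
      using orbit \<open>closedin T C\<close> by (intro closure_of_minimal) auto
    then show ?thesis using dense top C by simp
  next
    case False
    have "closedin T (topspace T - C)"
      using \<open>openin T C\<close> by (simp add: closedin_diff)
    then have "T closure_of ?O \<subseteq> topspace T - C"
      using False orbit top by (intro closure_of_minimal) auto
    then show ?thesis using dense \<open>C \<noteq> {}\<close> C top by blast
  qed
qed

lemma one_mem_centralizer:
  assumes "group G" and "N \<subseteq> carrier G"
  shows "\<one>\<^bsub>G\<^esub> \<in> centralizer G N"
  using assms by (auto simp: centralizer_def group.is_monoid monoid.one_closed subsetD)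

lemma subset_group_center_if_centralizer_eq_carrier:
  assumes "N \<subseteq> carrier G" and "centralizer G N = carrier G"
  shows "N \<subseteq> group_center G"
proof -
  have "m \<otimes>\<^bsub>G\<^esub> g = g \<otimes>\<^bsub>G\<^esub> m" if "g \<in> carrier G" "m \<in> N" for g m
  proof -
    have "g \<in> centralizer G N"
      using that assms(2) by simp
    then show ?thesis
      using \<open>m \<in> N\<close> unfolding centralizer_def by simp
  qed
  then show ?thesis
    using assms(1) unfolding group_center_def by blast
qed

theorem corollary5p13:
  fixes G :: "('a, 'b) monoid_scheme" and T :: "'a topology" and \<alpha> :: "'a \<Rightarrow> 'a"
    and N :: "'a set"
  assumes "topological_group G T"
    and "compact_space T"
    and "totally_disconnected_space T"
    and "top_group_aut G T \<alpha>"
    and "topologically_transitive G T \<alpha>"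
    and "subgroup N G" and "finite N" and "N \<lhd> G" and "\<alpha> ` N = N"
  shows "N \<subseteq> group_center G"
proof -
  have grp: "group G" and top: "topspace T = carrier G"
    using assms(1) unfolding topological_group_def by auto
  have t1: "t1_space T"
    using assms(3) by (rule totally_disconnected_imp_t1_space)
  have iso: "\<alpha> \<in> iso G G"
    using assms(4) unfolding top_group_aut_def by auto
  then have bij: "bij_betw \<alpha> (carrier G) (carrier G)"
    by (simp add: iso_def)
  have N: "N \<subseteq> carrier G"
    using assms(6) subgroup.subset by blast
  have "centralizer G N = carrier G"
    using topologically_transitive_clopen_invariant[OF assms(5) bij top]
      openin_centralizer_of_finite_normal[OF assms(1) t1 assms(7,8)]
      closedin_centralizer[OF assms(1) t1 N] one_mem_centralizer[OF grp N]
      iso_mem_centralizer_iff[OF grp iso assms(9) N]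
    by blast
  then show ?thesis
    by (rule subset_group_center_if_centralizer_eq_carrier[OF N])
qed

end
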